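(* Let $K$ be a distance-bound space-filling curve. Then $K$-light-first order is energy-bound. That is, for every constant $\Delta \ge 1$ there is a constant $C$ (depending only on $\Delta$ and $K$) such that for every rooted tree $T$ with $n$ vertices in which every vertex has at most $\Delta$ children, if $T$ is stored in $K$-light-first order, then $$\sum_{v \in T}\ \sum_{c \text{ child of } v} \mathrm{dist}(p_v, p_c) \le C\, n,$$ i.e. the total energy of every vertex sending one message to each of its children is $O(n)$.
   Context: Processors sit on the cells of a two-dimensional grid (large enough to hold the tree). Sending a message from a processor at $(x_1,y_1)$ to one at $(x_2,y_2)$ costs energy equal to the Manhattan distance $|x_1-x_2|+|y_1-y_2|$. A space-filling curve $K$ is an enumeration of the grid cells; the processor at the $i$-th cell of the enumeration is called the $i$-th processor, and $\mathrm{dist}(i,j)$ denotes the energy of sending a message from the $i$-th to the $j$-th processor. $K$ is distance-bound if there is a constant $c$ such that for all natural numbers $i, j$, $\mathrm{dist}(i, i+j) \le c\sqrt{j}$. Light-first order: each vertex $v$ of a rooted tree is stored in one processor, at position $p_v$ along $K$ (the root at the first position). For a vertex $v$ let $s(v)$ denote the number of vertices in the subtree rooted at $v$. A vertex $v$ with children indexed $c_1,\dots,c_d$ so that $s(c_1)\le s(c_2)\le \dots \le s(c_d)$ has its neighborhood in light-first order if each $c_i$ is stored at position $p_v + 1 + \sum_{j=1}^{i-1} s(c_j)$. The tree is stored in $K$-light-first order if every vertex has its neighborhood in light-first order. A light-first order is energy-bound if, for trees of degree bounded by a constant, the total energy of each vertex sending a message to all its children is $O(n)$, $n$ the number of vertices.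 *)

theory Defs
  imports Complex_Main
begin

text \<open>A space-filling curve: an enumeration (injective map) of grid cells.
  Positions are indexed from 0, so the root sits at position 0.\<close>

definition space_filling_curve :: "(nat \<Rightarrow> int \<times> int) \<Rightarrow> bool" where
  "space_filling_curve K \<longleftrightarrow> inj K"

definition sfc_dist :: "(nat \<Rightarrow> int \<times> int) \<Rightarrow> nat \<Rightarrow> nat \<Rightarrow> int" where
  "sfc_dist K i j = \<bar>fst (K i) - fst (K j)\<bar> + \<bar>snd (K i) - snd (K j)\<bar>"

definition distance_bound :: "(nat \<Rightarrow> int \<times> int) \<Rightarrow> bool" where
  "distance_bound K \<longleftrightarrow> (\<exists>c::real. \<forall>i j. real_of_int (sfc_dist K i (i + j)) \<le> c * sqrt (real j))"

definition rooted_tree :: "nat set \<Rightarrow> nat \<Rightarrow> (nat \<Rightarrow> nat) \<Rightarrow> bool" where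
  "rooted_tree V r par \<longleftrightarrow> finite V \<and> r \<in> V \<and> par r = r \<and> (\<forall>v\<in>V. par v \<in> V)
     \<and> (\<forall>v\<in>V. \<exists>k. (par ^^ k) v = r)"

definition children :: "nat set \<Rightarrow> nat \<Rightarrow> (nat \<Rightarrow> nat) \<Rightarrow> nat \<Rightarrow> nat set" where
  "children V r par v = {c \<in> V. c \<noteq> r \<and> par c = v}"

definition subtree_size :: "nat set \<Rightarrow> (nat \<Rightarrow> nat) \<Rightarrow> nat \<Rightarrow> nat" where
  "subtree_size V par v = card {u \<in> V. \<exists>k. (par ^^ k) u = v}"

definition light_first_nbhd :: "nat set \<Rightarrow> nat \<Rightarrow> (nat \<Rightarrow> nat) \<Rightarrow> (nat \<Rightarrow> nat) \<Rightarrow> nat \<Rightarrow> bool" where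
  "light_first_nbhd V r par p v \<longleftrightarrow>
     (\<exists>cs. distinct cs \<and> set cs = children V r par v
        \<and> sorted (map (subtree_size V par) cs)
        \<and> (\<forall>i < length cs. p (cs ! i) = p v + 1 + (\<Sum>j<i. subtree_size V par (cs ! j))))"

definition light_first_order :: "nat set \<Rightarrow> nat \<Rightarrow> (nat \<Rightarrow> nat) \<Rightarrow> (nat \<Rightarrow> nat) \<Rightarrow> bool" where
  "light_first_order V r par p \<longleftrightarrow> p r = 0 \<and> (\<forall>v\<in>V. light_first_nbhd V r par p v)"

definition tree_energy :: "(nat \<Rightarrow> int \<times> int) \<Rightarrow> nat set \<Rightarrow> nat \<Rightarrow> (nat \<Rightarrow> nat) \<Rightarrow> (nat \<Rightarrow> nat) \<Rightarrow> int" where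
  "tree_energy K V r par p = (\<Sum>v\<in>V. \<Sum>c\<in>children V r par v. sfc_dist K (p v) (p c))"

end

theory Submission
  imports Defs
begin

text \<open>
  In light-first order the children of \<open>v\<close> occupy consecutive blocks right after \<open>p v\<close>,
  ordered by increasing subtree size, so every child lies at most
  \<open>1 + \<Sum> (sizes of the light children)\<close> positions after \<open>v\<close>, the light children being all
  but one heaviest child. By the distance bound and subadditivity of \<open>sqrt\<close>, every edge
  leaving \<open>v\<close> costs at most \<open>c (1 + L v)\<close>, where \<open>L v\<close> (\<open>light_weight\<close>) is the sum of
  \<open>sqrt (s c)\<close> over the light children. The energy is therefore at most
  \<open>\<Delta> c (n + \<Sum>\<^sub>v L v)\<close>, and induction over subtrees shows that the sum of \<open>L w\<close> over
  the descendants \<open>w\<close> of \<open>v\<close> is at most \<open>2 s v - 2 sqrt (s v)\<close>: with \<open>M\<close> the size of a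
  heaviest child, the step is \<open>2 sqrt (s v) \<le> 1 + sqrt M + \<Sum>\<^sub>c sqrt (s c)\<close>, which follows by AM-GM from
  \<open>s v - 1 = \<Sum>\<^sub>c s c \<le> sqrt M \<Sum>\<^sub>c sqrt (s c)\<close>.
\<close>

lemma Max_set_sorted:
  assumes "sorted xs" and "xs \<noteq> []"
  shows "Max (set xs) = last xs"
proof (rule Max_eqI)
  have xs: "xs = butlast xs @ [last xs]" using assms(2) by simp
  show "y \<le> last xs" if "y \<in> set xs" for y
    using that assms(1) sorted_append[of "butlast xs" "[last xs]"] by (subst (asm) (1 2) xs) auto
qed (use assms in auto)

lemma double_le_of_sq_le:
  fixes x m X :: real
  assumes "1 \<le> m" and "x\<^sup>2 \<le> 1 + m * X"
  shows "2 * x \<le> 1 + m + X"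
proof -
  have "m * (2 * x) \<le> m\<^sup>2 + x\<^sup>2"
    using sum_squares_bound[of m x] by (simp add: algebra_simps)
  also have "\<dots> \<le> m * (1 + m + X)"
    using assms by (simp add: power2_eq_square algebra_simps)
  finally show ?thesis using \<open>1 \<le> m\<close> by simp
qed

lemma sqrt_sum_le_sum_sqrt:
  assumes "\<And>x. x \<in> A \<Longrightarrow> 0 \<le> f x"
  shows "sqrt (\<Sum>x\<in>A. f x) \<le> (\<Sum>x\<in>A. sqrt (f x))"
  using assms
proof (induction A rule: infinite_finite_induct)
  case (insert x A)
  have "sqrt (\<Sum>y\<in>insert x A. f y) \<le> sqrt (f x) + sqrt (\<Sum>y\<in>A. f y)"
    using insert by (simp add: sqrt_add_le_add_sqrt sum_nonneg)
  also have "\<dots> \<le> (\<Sum>y\<in>insert x A. sqrt (f y))"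
    using insert by simp
  finally show ?case .
qed simp_all

definition descendants :: "nat set \<Rightarrow> (nat \<Rightarrow> nat) \<Rightarrow> nat \<Rightarrow> nat set" where
  "descendants V par v = {u \<in> V. \<exists>k. (par ^^ k) u = v}"

lemma subtree_size_eq_card_descendants: "subtree_size V par v = card (descendants V par v)"
  by (simp add: subtree_size_def descendants_def)

lemma funpow_fixpoint: "f x = x \<Longrightarrow> (f ^^ n) x = x"
  by (induction n) auto

lemma rooted_tree_funpow_root: "rooted_tree V r par \<Longrightarrow> (par ^^ n) r = r"
  by (simp add: rooted_tree_def funpow_fixpoint)

lemma rooted_tree_cycle_root:
  assumes T: "rooted_tree V r par" and v: "v \<in> V" and cyc: "(par ^^ m) v = v" and "m > 0"
  shows "v = r"
proof -
  obtain k where k: "(par ^^ k) v = r" using T v by (auto simp: rooted_tree_def)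
  have "v = ((par ^^ m) ^^ k) v" using cyc by (simp add: funpow_fixpoint)
  also have "\<dots> = (par ^^ (m * k - k + k)) v"
    using \<open>m > 0\<close> by (simp add: funpow_mult)
  also have "\<dots> = (par ^^ (m * k - k)) ((par ^^ k) v)"
    by (simp add: funpow_add)
  also have "\<dots> = r" using k rooted_tree_funpow_root[OF T] by simp
  finally show ?thesis .
qed

lemma children_finite: "rooted_tree V r par \<Longrightarrow> finite (children V r par v)"
  by (auto simp: rooted_tree_def children_def)

lemma descendants_finite: "rooted_tree V r par \<Longrightarrow> finite (descendants V par v)"
  by (auto simp: rooted_tree_def descendants_def)

lemma children_in_tree:
  assumes "rooted_tree V r par" and "c \<in> children V r par v"
  shows "c \<in> V" and "v \<in> V" and "par c = v" and "c \<noteq> r"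
  using assms by (auto simp: rooted_tree_def children_def)

lemma descendants_root: "rooted_tree V r par \<Longrightarrow> descendants V par r = V"
  by (auto simp: rooted_tree_def descendants_def)

lemma self_in_descendants: "v \<in> V \<Longrightarrow> v \<in> descendants V par v"
  by (auto simp: descendants_def intro: exI[of _ 0])

lemma child_not_ancestor_of_parent:
  assumes T: "rooted_tree V r par" and c: "c \<in> children V r par v"
  shows "(par ^^ k) v \<noteq> c"
proof
  assume k: "(par ^^ k) v = c"
  then have "(par ^^ Suc k) v = v" using children_in_tree[OF T c] by simp
  then have "v = r" using rooted_tree_cycle_root[OF T children_in_tree(2)[OF T c]] by blast
  then show False using k children_in_tree(4)[OF T c] rooted_tree_funpow_root[OF T] by simp
qed

lemma siblings_common_descendant:
  assumes T: "rooted_tree V r par"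
    and c1: "c1 \<in> children V r par v" and c2: "c2 \<in> children V r par v"
    and k1: "(par ^^ k1) u = c1" and k2: "(par ^^ k2) u = c2" and "k1 \<le> k2"
  shows "c1 = c2"
proof (cases "k2 - k1")
  case 0
  then show ?thesis using k1 k2 \<open>k1 \<le> k2\<close> by simp
next
  case (Suc m)
  have "(par ^^ (k2 - k1)) c1 = c2"
    using k1 k2 \<open>k1 \<le> k2\<close> by (metis funpow_add le_add_diff_inverse2 o_apply)
  then have "(par ^^ m) v = c2"
    using Suc children_in_tree(3)[OF T c1] by (simp add: funpow_swap1)
  then show ?thesis using child_not_ancestor_of_parent[OF T c2] by blast
qed

lemma descendants_children_disjoint:
  assumes T: "rooted_tree V r par"
    and c1: "c1 \<in> children V r par v" and c2: "c2 \<in> children V r par v" and "c1 \<noteq> c2"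
  shows "descendants V par c1 \<inter> descendants V par c2 = {}"
proof -
  have False if "(par ^^ k1) u = c1" and "(par ^^ k2) u = c2" for u k1 k2
    using siblings_common_descendant[OF T c1 c2 that] siblings_common_descendant[OF T c2 c1 that(2,1)]
      \<open>c1 \<noteq> c2\<close> nat_le_linear[of k1 k2] by blast
  then show ?thesis by (auto simp: descendants_def)
qed

lemma descendants_via_children:
  assumes T: "rooted_tree V r par"
  shows "u \<in> V \<Longrightarrow> (par ^^ k) u = v \<Longrightarrow> u \<noteq> v
           \<Longrightarrow> \<exists>c\<in>children V r par v. u \<in> descendants V par c"
proof (induction k arbitrary: u)
  case (Suc k)
  show ?case
  proof (cases "par u = v")
    case True
    have "u \<noteq> r" using True Suc.prems T by (auto simp: rooted_tree_def)
    then show ?thesis using True Suc.prems by (auto simp: children_def intro: self_in_descendants)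
  next
    case False
    have "par u \<in> V" using T Suc.prems by (simp add: rooted_tree_def)
    moreover have "(par ^^ k) (par u) = v" using Suc.prems by (simp add: funpow_swap1)
    ultimately have "\<exists>c\<in>children V r par v. par u \<in> descendants V par c"
      using Suc.IH False by blast
    then obtain c j where "c \<in> children V r par v" "(par ^^ j) (par u) = c"
      by (auto simp: descendants_def)
    moreover from this(2) have "(par ^^ Suc j) u = c" by (simp add: funpow_swap1)
    ultimately show ?thesis using Suc.prems(1) unfolding descendants_def by blast
  qed
qed simp

lemma descendants_decompose:
  assumes T: "rooted_tree V r par" and v: "v \<in> V"
  shows "descendants V par v = insert v (\<Union>c\<in>children V r par v. descendants V par c)"
proof (intro equalityI subsetI)
  fix u assume "u \<in> descendants V par v"
  then show "u \<in> insert v (\<Union>c\<in>children V r par v. descendants V par c)"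
    using descendants_via_children[OF T] by (auto simp: descendants_def)
next
  fix u assume "u \<in> insert v (\<Union>c\<in>children V r par v. descendants V par c)"
  then show "u \<in> descendants V par v"
  proof
    assume "u \<in> (\<Union>c\<in>children V r par v. descendants V par c)"
    then obtain c k where "c \<in> children V r par v" "u \<in> V" "(par ^^ k) u = c"
      by (auto simp: descendants_def)
    then have "(par ^^ Suc k) u = v" using children_in_tree[OF T] by simp
    then show ?thesis using \<open>u \<in> V\<close> unfolding descendants_def by blast
  qed (use v self_in_descendants in simp)
qed

lemma sum_descendants:
  assumes T: "rooted_tree V r par" and v: "v \<in> V"
  shows "(\<Sum>w\<in>descendants V par v. f w)
           = f v + (\<Sum>c\<in>children V r par v. \<Sum>w\<in>descendants V par c. f w)"
proof -
  have "v \<notin> (\<Union>c\<in>children V r par v. descendants V par c)"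
    using child_not_ancestor_of_parent[OF T] by (auto simp: descendants_def)
  then show ?thesis
    unfolding descendants_decompose[OF T v]
    using children_finite[OF T] descendants_finite[OF T] descendants_children_disjoint[OF T]
    by (simp add: sum.UNION_disjoint)
qed

lemma subtree_size_rec:
  assumes "rooted_tree V r par" and "v \<in> V"
  shows "subtree_size V par v = 1 + (\<Sum>c\<in>children V r par v. subtree_size V par c)"
  using sum_descendants[OF assms, of "\<lambda>_. 1::nat"]
  by (simp add: subtree_size_eq_card_descendants)

lemma subtree_size_pos: "rooted_tree V r par \<Longrightarrow> v \<in> V \<Longrightarrow> 1 \<le> subtree_size V par v"
  by (simp add: subtree_size_rec)

lemma subtree_size_child_less:
  assumes T: "rooted_tree V r par" and c: "c \<in> children V r par v"
  shows "subtree_size V par c < subtree_size V par v"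
proof -
  have v: "v \<in> V" by (rule children_in_tree(2)[OF T c])
  have "descendants V par c \<subseteq> descendants V par v"
    using descendants_decompose[OF T v] c by blast
  moreover have "v \<notin> descendants V par c"
    using child_not_ancestor_of_parent[OF T c] by (auto simp: descendants_def)
  ultimately have "descendants V par c \<subset> descendants V par v"
    using self_in_descendants[OF v] by blast
  then show ?thesis
    by (simp add: subtree_size_eq_card_descendants psubset_card_mono descendants_finite[OF T])
qed

definition light_weight :: "nat set \<Rightarrow> nat \<Rightarrow> (nat \<Rightarrow> nat) \<Rightarrow> nat \<Rightarrow> real" where
  "light_weight V r par v =
     (\<Sum>c\<in>children V r par v. sqrt (subtree_size V par c))
     - (if children V r par v = {} then 0
        else sqrt (Max (subtree_size V par ` children V r par v)))"

lemma light_weight_nonneg: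
  assumes T: "rooted_tree V r par"
  shows "0 \<le> light_weight V r par v"
proof (cases "children V r par v = {}")
  case False
  let ?s = "subtree_size V par" and ?C = "children V r par v"
  have "Max (?s ` ?C) \<in> ?s ` ?C" using False children_finite[OF T] by simp
  then obtain m where "m \<in> ?C" and "Max (?s ` ?C) = ?s m" by blast
  then have "sqrt (Max (?s ` ?C)) \<le> (\<Sum>c\<in>?C. sqrt (?s c))"
    using member_le_sum[of m ?C "\<lambda>c. sqrt (?s c)"] children_finite[OF T] by simp
  then show ?thesis using False by (simp add: light_weight_def)
qed (simp add: light_weight_def)

lemma light_weight_sorted_children:
  assumes "distinct cs" and cs: "set cs = children V r par v"
    and sorted: "sorted (map (subtree_size V par) cs)"
  shows "light_weight V r par v = (\<Sum>j<length cs - 1. sqrt (subtree_size V par (cs ! j)))"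
proof -
  let ?s = "subtree_size V par"
  have "light_weight V r par v = (\<Sum>c\<in>set cs. sqrt (?s c))
          - (if set cs = {} then 0 else sqrt (Max (?s ` set cs)))"
    by (simp add: light_weight_def cs)
  also have "\<dots> = (\<Sum>j<length cs - 1. sqrt (?s (cs ! j)))"
  proof (cases "cs = []")
    case False
    obtain d where d: "length cs = Suc d" using False by (cases cs) auto
    have "Max (?s ` set cs) = ?s (cs ! d)"
      using Max_set_sorted[OF sorted] False d by (simp add: last_conv_nth)
    moreover have "(\<Sum>c\<in>set cs. sqrt (?s c)) = (\<Sum>j<length cs. sqrt (?s (cs ! j)))"
      using sum.reindex_bij_betw[OF bij_betw_nth[OF \<open>distinct cs\<close> refl refl],
          where g = "\<lambda>c. sqrt (?s c)"] by simp
    ultimately show ?thesis using False d by simp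
  qed simp
  finally show ?thesis .
qed

lemma light_first_child_offset:
  assumes lf: "light_first_nbhd V r par p v"
    and ch: "ch \<in> children V r par v"
  obtains j where "p ch = p v + j" and "sqrt (real j) \<le> 1 + light_weight V r par v"
proof -
  let ?s = "subtree_size V par"
  obtain cs where dc: "distinct cs" and cs: "set cs = children V r par v"
    and so: "sorted (map ?s cs)"
    and pos: "\<And>i. i < length cs \<Longrightarrow> p (cs ! i) = p v + 1 + (\<Sum>j<i. ?s (cs ! j))"
    using lf unfolding light_first_nbhd_def by blast
  obtain i where i: "i < length cs" and chi: "ch = cs ! i"
    using ch by (auto simp flip: cs simp: in_set_conv_nth)
  have "sqrt (real (1 + (\<Sum>j<i. ?s (cs ! j)))) \<le> sqrt 1 + sqrt (\<Sum>j<i. real (?s (cs ! j)))"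
    using sqrt_add_le_add_sqrt[of 1 "\<Sum>j<i. real (?s (cs ! j))"] by (simp add: sum_nonneg)
  also have "\<dots> \<le> 1 + (\<Sum>j<i. sqrt (?s (cs ! j)))"
    using sqrt_sum_le_sum_sqrt[of "{..<i}" "\<lambda>j. real (?s (cs ! j))"] by simp
  also have "\<dots> \<le> 1 + (\<Sum>j<length cs - 1. sqrt (?s (cs ! j)))"
    using i by (intro add_left_mono sum_mono2) auto
  also have "\<dots> = 1 + light_weight V r par v"
    using light_weight_sorted_children[OF dc cs so] by simp
  finally have "sqrt (real (1 + (\<Sum>j<i. ?s (cs ! j)))) \<le> 1 + light_weight V r par v" .
  moreover have "p ch = p v + (1 + (\<Sum>j<i. ?s (cs ! j)))" using pos[OF i] chi by simp
  ultimately show ?thesis using that by blast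
qed

lemma vertex_energy_le:
  assumes lf: "light_first_nbhd V r par p v"
    and db: "\<And>i j. real_of_int (sfc_dist K i (i + j)) \<le> c * sqrt (real j)" and "0 \<le> c"
  shows "real_of_int (\<Sum>ch\<in>children V r par v. sfc_dist K (p v) (p ch))
           \<le> real (card (children V r par v)) * c * (1 + light_weight V r par v)"
proof -
  have "real_of_int (sfc_dist K (p v) (p ch)) \<le> c * (1 + light_weight V r par v)"
    if ch: "ch \<in> children V r par v" for ch
  proof -
    obtain j where "p ch = p v + j" "sqrt (real j) \<le> 1 + light_weight V r par v"
      using light_first_child_offset[OF lf ch] .
    then show ?thesis using db[of "p v" j] \<open>0 \<le> c\<close> by (metis mult_left_mono order_trans)
  qed
  then have "(\<Sum>ch\<in>children V r par v. real_of_int (sfc_dist K (p v) (p ch)))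
              \<le> real (card (children V r par v)) * (c * (1 + light_weight V r par v))"
    by (rule sum_bounded_above)
  then show ?thesis by (simp add: mult.assoc)
qed

lemma sqrt_subtree_size_le:
  assumes T: "rooted_tree V r par" and v: "v \<in> V"
  shows "2 * sqrt (subtree_size V par v)
           \<le> 2 + 2 * (\<Sum>c\<in>children V r par v. sqrt (subtree_size V par c)) - light_weight V r par v"
proof (cases "children V r par v = {}")
  case True
  then show ?thesis using subtree_size_rec[OF T v] by (simp add: light_weight_def)
next
  case False
  let ?s = "subtree_size V par" and ?C = "children V r par v"
  define M where "M = Max (?s ` ?C)"
  have M: "M \<in> ?s ` ?C" and le_M: "\<And>c. c \<in> ?C \<Longrightarrow> ?s c \<le> M"
    using False children_finite[OF T] by (simp_all add: M_def)
  then have "1 \<le> sqrt M"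
    using subtree_size_pos[OF T] children_in_tree(1)[OF T] by auto
  have "real (?s c) \<le> sqrt M * sqrt (?s c)" if "c \<in> ?C" for c
  proof -
    have "real (?s c) = sqrt (?s c) * sqrt (?s c)" by simp
    also have "\<dots> \<le> sqrt M * sqrt (?s c)" using le_M[OF that] by (intro mult_right_mono) auto
    finally show ?thesis .
  qed
  then have "(\<Sum>c\<in>?C. real (?s c)) \<le> sqrt M * (\<Sum>c\<in>?C. sqrt (?s c))"
    by (simp add: sum_distrib_left sum_mono)
  moreover have "(sqrt (?s v))\<^sup>2 = 1 + (\<Sum>c\<in>?C. real (?s c))"
    using subtree_size_rec[OF T v] by (simp add: add_nonneg_nonneg sum_nonneg)
  ultimately have "(sqrt (?s v))\<^sup>2 \<le> 1 + sqrt M * (\<Sum>c\<in>?C. sqrt (?s c))"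
    by linarith
  then have "2 * sqrt (?s v) \<le> 1 + sqrt M + (\<Sum>c\<in>?C. sqrt (?s c))"
    using double_le_of_sq_le[OF \<open>1 \<le> sqrt M\<close>] by blast
  then show ?thesis using False by (simp add: light_weight_def M_def)
qed

lemma sum_light_weight_descendants_le:
  assumes T: "rooted_tree V r par" and "v \<in> V"
  shows "(\<Sum>w\<in>descendants V par v. light_weight V r par w)
           \<le> 2 * subtree_size V par v - 2 * sqrt (subtree_size V par v)"
  using \<open>v \<in> V\<close>
proof (induction "subtree_size V par v" arbitrary: v rule: less_induct)
  case (less v)
  let ?s = "subtree_size V par" and ?C = "children V r par v"
  have IH: "(\<Sum>w\<in>descendants V par c. light_weight V r par w) \<le> 2 * ?s c - 2 * sqrt (?s c)"
    if "c \<in> ?C" for c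
    using less.hyps subtree_size_child_less[OF T that] children_in_tree(1)[OF T that] .
  have "(\<Sum>w\<in>descendants V par v. light_weight V r par w)
          = light_weight V r par v + (\<Sum>c\<in>?C. \<Sum>w\<in>descendants V par c. light_weight V r par w)"
    by (rule sum_descendants[OF T less.prems])
  also have "\<dots> \<le> light_weight V r par v + (\<Sum>c\<in>?C. 2 * real (?s c) - 2 * sqrt (?s c))"
    using IH by (intro add_left_mono sum_mono) auto
  also have "\<dots> = light_weight V r par v + 2 * (real (?s v) - 1) - 2 * (\<Sum>c\<in>?C. sqrt (?s c))"
    using subtree_size_rec[OF T less.prems] by (simp add: sum_subtractf sum_distrib_left)
  also have "\<dots> \<le> 2 * ?s v - 2 * sqrt (?s v)"
    using sqrt_subtree_size_le[OF T less.prems] by simp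
  finally show ?case .
qed

lemma sum_light_weight_le:
  assumes T: "rooted_tree V r par"
  shows "(\<Sum>v\<in>V. light_weight V r par v) \<le> 2 * card V"
proof -
  have "r \<in> V" using T by (simp add: rooted_tree_def)
  then have "(\<Sum>v\<in>V. light_weight V r par v) \<le> 2 * card V - 2 * sqrt (card V)"
    using sum_light_weight_descendants_le[OF T]
    by (metis descendants_root[OF T] subtree_size_eq_card_descendants)
  then show ?thesis using real_sqrt_ge_zero[of "card V"] by linarith
qed

lemma tree_energy_le:
  assumes T: "rooted_tree V r par" and deg: "\<forall>v\<in>V. card (children V r par v) \<le> \<Delta>"
    and lf: "light_first_order V r par p"
    and db: "\<And>i j. real_of_int (sfc_dist K i (i + j)) \<le> c * sqrt (real j)" and "0 \<le> c"
  shows "real_of_int (tree_energy K V r par p) \<le> 3 * real \<Delta> * c * real (card V)"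
proof -
  have "real_of_int (tree_energy K V r par p)
          \<le> (\<Sum>v\<in>V. real (card (children V r par v)) * c * (1 + light_weight V r par v))"
    using vertex_energy_le[OF _ db \<open>0 \<le> c\<close>] lf
    unfolding tree_energy_def light_first_order_def of_int_sum by (intro sum_mono) auto
  also have "\<dots> \<le> (\<Sum>v\<in>V. \<Delta> * c * (1 + light_weight V r par v))"
    using deg \<open>0 \<le> c\<close> light_weight_nonneg[OF T]
    by (intro sum_mono mult_right_mono) (auto simp: add_nonneg_nonneg)
  also have "\<dots> = \<Delta> * c * (card V + (\<Sum>v\<in>V. light_weight V r par v))"
    unfolding sum_distrib_left[symmetric] sum.distrib by simp
  also have "\<dots> \<le> \<Delta> * c * (card V + 2 * card V)"
    using sum_light_weight_le[OF T] \<open>0 \<le> c\<close> by (intro mult_left_mono) auto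
  finally show ?thesis by (simp add: algebra_simps)
qed

lemma distance_bound_nonneg_const:
  assumes "distance_bound K"
  obtains c where "0 \<le> c" and "\<And>i j. real_of_int (sfc_dist K i (i + j)) \<le> c * sqrt (real j)"
proof -
  obtain c where db: "\<And>i j. real_of_int (sfc_dist K i (i + j)) \<le> c * sqrt (real j)"
    using assms unfolding distance_bound_def by blast
  have "0 \<le> real_of_int (sfc_dist K 0 (0 + 1))" by (simp add: sfc_dist_def)
  also have "\<dots> \<le> c" using db[of 0 1] by simp
  finally show ?thesis using that db by blast
qed

theorem mainTheorem1:
  fixes K :: "nat \<Rightarrow> int \<times> int"
  assumes "space_filling_curve K" and "distance_bound K"
  shows "\<forall>\<Delta>::nat. \<Delta> \<ge> 1 \<longrightarrow> (\<exists>C::real. \<forall>V r par p.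
           rooted_tree V r par \<and> (\<forall>v\<in>V. card (children V r par v) \<le> \<Delta>)
           \<and> light_first_order V r par p
           \<longrightarrow> real_of_int (tree_energy K V r par p) \<le> C * real (card V))"
proof -
  obtain c where "0 \<le> c" and db: "\<And>i j. real_of_int (sfc_dist K i (i + j)) \<le> c * sqrt (real j)"
    using distance_bound_nonneg_const[OF assms(2)] by blast
  show ?thesis
    using tree_energy_le[OF _ _ _ db \<open>0 \<le> c\<close>] by blast
qed

end
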